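(* Let $K$ be a commutative ring with identity, let $G$ be a group and $n\ge 0$. If $G$ is of type $FP_n$ over $K$ (i.e. left-$FP_n$), then $G$ is bi-$FP_n$ over $K$.
   Context: $KG$ is the group ring, with augmentation $\varepsilon:KG\to K$, $g\mapsto 1$. A module is of type $FP_n$ if there is an exact sequence $0\leftarrow M\leftarrow P_0\leftarrow\cdots\leftarrow P_n$ with $P_0,\dots,P_n$ finitely generated free modules. $G$ is of type $FP_n$ over $K$ if $K$, regarded as a left $KG$-module via $\varepsilon$, is of type $FP_n$ (for groups left and right versions coincide). A $(KG,KG)$-bimodule is an abelian group with commuting left and right $KG$-actions with $km=mk$ for $k\in K$; the free bimodule of rank $1$ is $KG\otimes_K KG$ with $a(u\otimes v)b=au\otimes vb$, and a free bimodule of rank $r$ is a direct sum of $r$ copies of it. $G$ is bi-$FP_n$ if $KG$, regarded as a $(KG,KG)$-bimodule by left and right multiplication, admits an exact sequence $0\leftarrow KG\leftarrow F_0\leftarrow\cdots\leftarrow F_n$ with $F_0,\dots,F_n$ finitely generated free $(KG,KG)$-bimodules. *)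

theory Defs
  imports "HOL-Library.Poly_Mapping" "HOL-Library.Product_Plus"
begin

text \<open>The group G is a type 'g of class group_add (group written additively, NOT
  necessarily commutative).  The group ring KG is the poly_mapping type of finitely
  supported functions with convolution product (Poly_Mapping).\<close>

type_synonym ('g, 'k) group_ring = "'g \<Rightarrow>\<^sub>0 'k"

definition augmentation :: "('g::group_add, 'k::comm_ring_1) group_ring \<Rightarrow> 'k" where
  "augmentation a = (\<Sum>x\<in>Poly_Mapping.keys a. Poly_Mapping.lookup a x)"

text \<open>Elementary tensor u \<otimes> v in KG \<otimes>_K KG, identified with K[G \<times> G].\<close>
definition tens :: "('g::group_add, 'k::comm_ring_1) group_ring \<Rightarrow> ('g, 'k) group_ring
    \<Rightarrow> ('g \<times> 'g, 'k) group_ring" where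
  "tens u v = (\<Sum>x\<in>Poly_Mapping.keys u. \<Sum>y\<in>Poly_Mapping.keys v. Poly_Mapping.single (x, y) (Poly_Mapping.lookup u x * Poly_Mapping.lookup v y))"

text \<open>Free module of rank r over a ring: vectors indexed by nat, supported in {..<r}.\<close>
definition vec :: "nat \<Rightarrow> (nat \<Rightarrow> 'r::zero) set" where
  "vec r = {v. \<forall>i\<ge>r. v i = 0}"

definition lact :: "('g::group_add, 'k::comm_ring_1) group_ring \<Rightarrow> (nat \<Rightarrow> ('g, 'k) group_ring)
    \<Rightarrow> (nat \<Rightarrow> ('g, 'k) group_ring)" where
  "lact a v = (\<lambda>i. a * v i)"

text \<open>Bimodule actions on the free bimodule (KG \<otimes>_K KG)^r:
  a (u \<otimes> v) b = a u \<otimes> v b.\<close>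
definition bl_act :: "('g::group_add, 'k::comm_ring_1) group_ring \<Rightarrow> (nat \<Rightarrow> ('g \<times> 'g, 'k) group_ring)
    \<Rightarrow> (nat \<Rightarrow> ('g \<times> 'g, 'k) group_ring)" where
  "bl_act a v = (\<lambda>i. tens a 1 * v i)"

definition br_act :: "(nat \<Rightarrow> ('g::group_add \<times> 'g, 'k::comm_ring_1) group_ring)
    \<Rightarrow> ('g, 'k) group_ring \<Rightarrow> (nat \<Rightarrow> ('g \<times> 'g, 'k) group_ring)" where
  "br_act v b = (\<lambda>i. v i * tens 1 b)"

definition left_hom :: "nat \<Rightarrow> nat \<Rightarrow> ((nat \<Rightarrow> ('g::group_add, 'k::comm_ring_1) group_ring)
    \<Rightarrow> (nat \<Rightarrow> ('g, 'k) group_ring)) \<Rightarrow> bool" where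
  "left_hom r s f \<longleftrightarrow> f ` vec r \<subseteq> vec s
     \<and> (\<forall>x\<in>vec r. \<forall>y\<in>vec r. f (\<lambda>i. x i + y i) = (\<lambda>i. f x i + f y i))
     \<and> (\<forall>a. \<forall>x\<in>vec r. f (lact a x) = lact a (f x))"

definition left_hom_K :: "nat \<Rightarrow> ((nat \<Rightarrow> ('g::group_add, 'k::comm_ring_1) group_ring) \<Rightarrow> 'k) \<Rightarrow> bool" where
  "left_hom_K r f \<longleftrightarrow>
       (\<forall>x\<in>vec r. \<forall>y\<in>vec r. f (\<lambda>i. x i + y i) = f x + f y)
     \<and> (\<forall>a. \<forall>x\<in>vec r. f (lact a x) = augmentation a * f x)"

definition bi_hom :: "nat \<Rightarrow> nat \<Rightarrow> ((nat \<Rightarrow> ('g::group_add \<times> 'g, 'k::comm_ring_1) group_ring)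
    \<Rightarrow> (nat \<Rightarrow> ('g \<times> 'g, 'k) group_ring)) \<Rightarrow> bool" where
  "bi_hom r s f \<longleftrightarrow> f ` vec r \<subseteq> vec s
     \<and> (\<forall>x\<in>vec r. \<forall>y\<in>vec r. f (\<lambda>i. x i + y i) = (\<lambda>i. f x i + f y i))
     \<and> (\<forall>a. \<forall>x\<in>vec r. f (bl_act a x) = bl_act a (f x))
     \<and> (\<forall>b. \<forall>x\<in>vec r. f (br_act x b) = br_act (f x) b)"

definition bi_hom_KG :: "nat \<Rightarrow> ((nat \<Rightarrow> ('g::group_add \<times> 'g, 'k::comm_ring_1) group_ring)
    \<Rightarrow> ('g, 'k) group_ring) \<Rightarrow> bool" where
  "bi_hom_KG r f \<longleftrightarrow>
       (\<forall>x\<in>vec r. \<forall>y\<in>vec r. f (\<lambda>i. x i + y i) = f x + f y)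
     \<and> (\<forall>a. \<forall>x\<in>vec r. f (bl_act a x) = a * f x)
     \<and> (\<forall>b. \<forall>x\<in>vec r. f (br_act x b) = f x * b)"

definition FP :: "'k::comm_ring_1 itself \<Rightarrow> 'g::group_add itself \<Rightarrow> nat \<Rightarrow> bool" where
  "FP (TYPE('k)) (TYPE('g)) n \<longleftrightarrow>
     (\<exists>(r :: nat \<Rightarrow> nat)
        (e :: (nat \<Rightarrow> ('g, 'k) group_ring) \<Rightarrow> 'k)
        (d :: nat \<Rightarrow> (nat \<Rightarrow> ('g, 'k) group_ring) \<Rightarrow> (nat \<Rightarrow> ('g, 'k) group_ring)).
        left_hom_K (r 0) e
      \<and> (\<forall>i\<in>{1..n}. left_hom (r i) (r (i - 1)) (d i))
      \<and> e ` vec (r 0) = UNIV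
      \<and> (1 \<le> n \<longrightarrow> {x \<in> vec (r 0). e x = 0} = d 1 ` vec (r 1))
      \<and> (\<forall>i\<in>{1..<n}. {x \<in> vec (r i). d i x = (\<lambda>_. 0)} = d (i + 1) ` vec (r (i + 1))))"

definition bi_FP :: "'k::comm_ring_1 itself \<Rightarrow> 'g::group_add itself \<Rightarrow> nat \<Rightarrow> bool" where
  "bi_FP (TYPE('k)) (TYPE('g)) n \<longleftrightarrow>
     (\<exists>(r :: nat \<Rightarrow> nat)
        (e :: (nat \<Rightarrow> ('g \<times> 'g, 'k) group_ring) \<Rightarrow> ('g, 'k) group_ring)
        (d :: nat \<Rightarrow> (nat \<Rightarrow> ('g \<times> 'g, 'k) group_ring) \<Rightarrow> (nat \<Rightarrow> ('g \<times> 'g, 'k) group_ring)).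
        bi_hom_KG (r 0) e
      \<and> (\<forall>i\<in>{1..n}. bi_hom (r i) (r (i - 1)) (d i))
      \<and> e ` vec (r 0) = UNIV
      \<and> (1 \<le> n \<longrightarrow> {x \<in> vec (r 0). e x = 0} = d 1 ` vec (r 1))
      \<and> (\<forall>i\<in>{1..<n}. {x \<in> vec (r i). d i x = (\<lambda>_. 0)} = d (i + 1) ` vec (r (i + 1))))"

end

theory Submission
  imports Defs
begin

(* A (KG,KG)-bimodule is a left module over KG \<otimes> KG = K[G \<times> G], and KG is the bimodule induced
   from the trivial module K along the diagonal: KG = (KG \<otimes> KG) \<otimes>_KG K, where KG acts on
   KG \<otimes> KG from the right by (u \<otimes> v) a = u a \<otimes> a^-1 v and the isomorphism is multiplication.
   For this action KG \<otimes> KG is a free KG-module on the elements (x, 0), x \<in> G, the coordinates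
   of w being its fibres over the multiplication map G \<times> G \<rightarrow> G.  Hence induction is exact and
   sends KG^r to the free bimodule of rank r, so it carries a resolution of K witnessing FP_n to
   one of KG witnessing bi-FP_n; exactness is checked fibre by fibre. *)

lemma poly_mapping_sum_single:
  fixes p :: "'a \<Rightarrow>\<^sub>0 'b::comm_monoid_add"
  shows "(\<Sum>k\<in>Poly_Mapping.keys p. Poly_Mapping.single k (Poly_Mapping.lookup p k)) = p"
  by (rule poly_mapping_eqI) (simp add: lookup_sum lookup_single when_def in_keys_iff)

lemma poly_mapping_induct [case_names zero single add]:
  fixes p :: "'a \<Rightarrow>\<^sub>0 'b::comm_monoid_add"
  assumes "P 0" and "\<And>k c. P (Poly_Mapping.single k c)"
    and "\<And>p q. P p \<Longrightarrow> P q \<Longrightarrow> P (p + q)"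
  shows "P p"
proof -
  have "P (\<Sum>k\<in>S. Poly_Mapping.single k (Poly_Mapping.lookup p k))" if "finite S" for S
    using that by (induction S rule: finite_induct) (auto intro: assms)
  from this[of "Poly_Mapping.keys p"] show ?thesis
    by (simp add: poly_mapping_sum_single)
qed

lemma augmentation_eq_sum:
  assumes "finite S" and "Poly_Mapping.keys a \<subseteq> S"
  shows "augmentation a = (\<Sum>x\<in>S. Poly_Mapping.lookup a x)"
  unfolding augmentation_def
  by (rule sum.mono_neutral_left) (use assms in \<open>auto simp: in_keys_iff\<close>)

lemma augmentation_add:
  fixes a b :: "('g::group_add, 'k::comm_ring_1) group_ring"
  shows "augmentation (a + b) = augmentation a + augmentation b"
proof -
  let ?S = "Poly_Mapping.keys a \<union> Poly_Mapping.keys b"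
  have "Poly_Mapping.keys (a + b) \<subseteq> ?S"
    by (rule keys_add)
  then show ?thesis
    by (simp add: augmentation_eq_sum[of ?S] lookup_add sum.distrib)
qed

lemma single_zero_commute:
  fixes p :: "('g::group_add, 'k::comm_ring_1) group_ring"
  shows "Poly_Mapping.single 0 c * p = p * Poly_Mapping.single 0 c"
  by (induction p rule: poly_mapping_induct)
    (simp_all add: mult_single mult.commute distrib_left distrib_right)

lemma lookup_mult_single_zero:
  fixes p :: "('g::group_add, 'k::comm_ring_1) group_ring"
  shows "Poly_Mapping.lookup (p * Poly_Mapping.single 0 c) x = Poly_Mapping.lookup p x * c"
  by (induction p rule: poly_mapping_induct)
    (simp_all add: mult_single lookup_single when_def distrib_right lookup_add)

text \<open>The action (u \<otimes> v) a = u a \<otimes> a^-1 v, with G written additively.\<close>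

definition inner_act ::
    "('g::group_add \<times> 'g, 'k::comm_ring_1) group_ring \<Rightarrow> ('g, 'k) group_ring \<Rightarrow> ('g \<times> 'g, 'k) group_ring" where
  "inner_act w a = (\<Sum>g\<in>Poly_Mapping.keys a.
     Poly_Mapping.single (0, - g) (Poly_Mapping.lookup a g) * w * Poly_Mapping.single (g, 0) 1)"

text \<open>As (x, 0) b = (x + b, - b) for this action, fibre w x is the coordinate of w at the basis
  element (x, 0).\<close>

definition fibre :: "('g::group_add \<times> 'g, 'k::comm_ring_1) group_ring \<Rightarrow> 'g \<Rightarrow> ('g, 'k) group_ring" where
  "fibre w x = Abs_poly_mapping (\<lambda>b. Poly_Mapping.lookup w (x + b, - b))"

lemma lookup_fibre: "Poly_Mapping.lookup (fibre w x) b = Poly_Mapping.lookup w (x + b, - b)"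
proof -
  have "{b. Poly_Mapping.lookup w (x + b, - b) \<noteq> 0} \<subseteq> (\<lambda>p. - snd p) ` Poly_Mapping.keys w"
    by (auto simp: in_keys_iff image_iff intro!: bexI[of _ "(x + _, - _)"])
  then have "finite {b. Poly_Mapping.lookup w (x + b, - b) \<noteq> 0}"
    by (rule finite_subset) simp
  then show ?thesis
    unfolding fibre_def by simp
qed

lemma fibre_add: "fibre (v + w) x = fibre v x + fibre w x"
  by (rule poly_mapping_eqI) (simp add: lookup_fibre lookup_add)

lemma fibre_0 [simp]: "fibre 0 x = 0"
  by (rule poly_mapping_eqI) (simp add: lookup_fibre)

lemma fibre_sum: "fibre (\<Sum>i\<in>S. f i) x = (\<Sum>i\<in>S. fibre (f i) x)"
  by (induction S rule: infinite_finite_induct) (simp_all add: fibre_add)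

lemma fibre_single:
  "fibre (Poly_Mapping.single (g, h) c) x = (if x = g + h then Poly_Mapping.single (- h) c else 0)"
proof (rule poly_mapping_eqI)
  fix b
  have "(x + b = g \<and> - b = h) \<longleftrightarrow> (x = g + h \<and> b = - h)"
    by (auto simp: add.assoc)
  then show "Poly_Mapping.lookup (fibre (Poly_Mapping.single (g, h) c) x) b =
      Poly_Mapping.lookup (if x = g + h then Poly_Mapping.single (- h) c else 0) b"
    by (auto simp: lookup_fibre lookup_single when_def)
qed

lemma fibre_eq_0_outside:
  assumes "x \<notin> (\<lambda>p. fst p + snd p) ` Poly_Mapping.keys w"
  shows "fibre w x = 0"
proof (rule poly_mapping_eqI)
  fix b
  have "x = fst (x + b, - b) + snd (x + b, - b)"
    by (simp add: add.assoc)
  then have "(x + b, - b) \<notin> Poly_Mapping.keys w"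
    using assms by blast
  then show "Poly_Mapping.lookup (fibre w x) b = Poly_Mapping.lookup 0 b"
    by (simp add: lookup_fibre in_keys_iff)
qed

lemma fibres_eqI:
  assumes "\<And>x. fibre v x = fibre w x"
  shows "v = w"
proof (rule poly_mapping_eqI)
  fix p :: "'a \<times> 'a"
  obtain g h where p: "p = (g, h)"
    by fastforce
  have "Poly_Mapping.lookup (fibre v (g + h)) (- h) = Poly_Mapping.lookup (fibre w (g + h)) (- h)"
    using assms by simp
  then show "Poly_Mapping.lookup v p = Poly_Mapping.lookup w p"
    by (simp add: lookup_fibre p add.assoc)
qed

lemma fibres_eq_0_iff: "(\<forall>x. fibre w x = 0) \<longleftrightarrow> w = 0"
  using fibres_eqI[of w 0] by auto

lemma inner_act_add: "inner_act (v + w) a = inner_act v a + inner_act w a"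
  by (simp add: inner_act_def distrib_left distrib_right sum.distrib)

lemma inner_act_0_right [simp]: "inner_act w 0 = 0"
  by (simp add: inner_act_def)

lemma fibre_inner_act_single:
  "fibre (Poly_Mapping.single (0, - g) c * w * Poly_Mapping.single (g, 0) 1) x =
    fibre w x * Poly_Mapping.single g c"
proof (induction w rule: poly_mapping_induct)
  case (single k v)
  obtain p q where k: "k = (p, q)"
    by fastforce
  have "p + g + (- g + q) = p + q"
    by (simp add: add.assoc)
  then show ?case
    by (simp add: k mult_single fibre_single minus_add mult.commute)
qed (simp_all add: distrib_left distrib_right fibre_add)

lemma fibre_inner_act: "fibre (inner_act w a) x = fibre w x * a"
proof -
  have "fibre (inner_act w a) x =
      fibre w x * (\<Sum>g\<in>Poly_Mapping.keys a. Poly_Mapping.single g (Poly_Mapping.lookup a g))"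
    by (simp add: inner_act_def fibre_sum fibre_inner_act_single sum_distrib_left)
  then show ?thesis
    by (simp add: poly_mapping_sum_single)
qed

lemma fibre_single_basis: "fibre (Poly_Mapping.single (y, 0) 1) x = (if x = y then 1 else 0)"
  by (simp add: fibre_single)

lemma tens_1_right:
  "tens a 1 = (\<Sum>x\<in>Poly_Mapping.keys a. Poly_Mapping.single (x, 0) (Poly_Mapping.lookup a x))"
  by (simp add: tens_def)

lemma tens_1_left:
  "tens 1 b = (\<Sum>y\<in>Poly_Mapping.keys b. Poly_Mapping.single (0, y) (Poly_Mapping.lookup b y))"
  by (simp add: tens_def)

lemma tens_1_right_commute:
  "Poly_Mapping.single (0, y) c * tens a 1 = tens a 1 * Poly_Mapping.single (0, y) c"
  by (simp add: tens_1_right sum_distrib_left sum_distrib_right mult_single mult.commute)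

lemma tens_1_left_commute:
  "Poly_Mapping.single (x, 0) c * tens 1 b = tens 1 b * Poly_Mapping.single (x, 0) c"
  by (simp add: tens_1_left sum_distrib_left sum_distrib_right mult_single mult.commute)

lemma inner_act_tens_left: "inner_act (tens a 1 * w) b = tens a 1 * inner_act w b"
proof -
  have "tens a 1 * (Poly_Mapping.single (0, y) c * v) = Poly_Mapping.single (0, y) c * (tens a 1 * v)" for y c v
    by (simp add: tens_1_right_commute flip: mult.assoc)
  then show ?thesis
    by (simp add: inner_act_def sum_distrib_left mult.assoc)
qed

lemma inner_act_tens_right: "inner_act (w * tens 1 b) a = inner_act w a * tens 1 b"
  by (simp add: inner_act_def sum_distrib_right mult.assoc tens_1_left_commute)

text \<open>Multiplication u \<otimes> v \<mapsto> u v (see mult_map_single), written through fibres as the map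
  induced by the augmentation.\<close>

definition mult_map :: "('g::group_add \<times> 'g, 'k::comm_ring_1) group_ring \<Rightarrow> ('g, 'k) group_ring" where
  "mult_map w = Abs_poly_mapping (\<lambda>x. augmentation (fibre w x))"

lemma lookup_mult_map: "Poly_Mapping.lookup (mult_map w) x = augmentation (fibre w x)"
proof -
  have "{x. augmentation (fibre w x) \<noteq> 0} \<subseteq> (\<lambda>p. fst p + snd p) ` Poly_Mapping.keys w"
  proof
    fix x
    assume "x \<in> {x. augmentation (fibre w x) \<noteq> 0}"
    then have "fibre w x \<noteq> 0"
      by (auto simp: augmentation_def)
    then show "x \<in> (\<lambda>p. fst p + snd p) ` Poly_Mapping.keys w"
      using fibre_eq_0_outside by blast
  qed
  then have "finite {x. augmentation (fibre w x) \<noteq> 0}"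
    by (rule finite_subset) simp
  then show ?thesis
    unfolding mult_map_def by simp
qed

lemma mult_map_add: "mult_map (v + w) = mult_map v + mult_map w"
  by (rule poly_mapping_eqI) (simp add: lookup_mult_map lookup_add fibre_add augmentation_add)

lemma mult_map_0 [simp]: "mult_map 0 = 0"
  by (rule poly_mapping_eqI) (simp add: lookup_mult_map augmentation_def)

lemma mult_map_sum: "mult_map (\<Sum>i\<in>S. f i) = (\<Sum>i\<in>S. mult_map (f i))"
  by (induction S rule: infinite_finite_induct) (simp_all add: mult_map_add)

lemma mult_map_single: "mult_map (Poly_Mapping.single (g, h) c) = Poly_Mapping.single (g + h) c"
  by (rule poly_mapping_eqI) (simp add: lookup_mult_map fibre_single lookup_single when_def augmentation_def)

lemma mult_map_single_mult:
  "mult_map (Poly_Mapping.single (x, 0) c * w) = Poly_Mapping.single x c * mult_map w"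
proof (induction w rule: poly_mapping_induct)
  case (single k v)
  obtain p q where "k = (p, q)"
    by fastforce
  then show ?case
    by (simp add: mult_single mult_map_single add.assoc)
qed (simp_all add: distrib_left mult_map_add)

lemma mult_map_mult_single:
  "mult_map (w * Poly_Mapping.single (0, y) c) = mult_map w * Poly_Mapping.single y c"
proof (induction w rule: poly_mapping_induct)
  case (single k v)
  obtain p q where "k = (p, q)"
    by fastforce
  then show ?case
    by (simp add: mult_single mult_map_single add.assoc)
qed (simp_all add: distrib_right mult_map_add)

lemma mult_map_tens_left: "mult_map (tens a 1 * w) = a * mult_map w"
proof -
  have "mult_map (tens a 1 * w) =
      (\<Sum>x\<in>Poly_Mapping.keys a. Poly_Mapping.single x (Poly_Mapping.lookup a x)) * mult_map w"
    by (simp add: tens_1_right sum_distrib_right mult_map_sum mult_map_single_mult)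
  then show ?thesis
    by (simp add: poly_mapping_sum_single)
qed

lemma mult_map_tens_right: "mult_map (w * tens 1 b) = mult_map w * b"
proof -
  have "mult_map (w * tens 1 b) =
      mult_map w * (\<Sum>y\<in>Poly_Mapping.keys b. Poly_Mapping.single y (Poly_Mapping.lookup b y))"
    by (simp add: tens_1_left sum_distrib_left mult_map_sum mult_map_mult_single)
  then show ?thesis
    by (simp add: poly_mapping_sum_single)
qed

definition additive_on_vec :: "nat \<Rightarrow> ((nat \<Rightarrow> 'a::monoid_add) \<Rightarrow> 'b::plus) \<Rightarrow> bool" where
  "additive_on_vec r f \<longleftrightarrow> (\<forall>x\<in>vec r. \<forall>y\<in>vec r. f (\<lambda>i. x i + y i) = f x + f y)"

definition unit_vec :: "nat \<Rightarrow> nat \<Rightarrow> 'a::{zero,one}" where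
  "unit_vec j = (\<lambda>k. if k = j then 1 else 0)"

lemma zero_in_vec [simp]: "(\<lambda>_. 0) \<in> vec r"
  by (simp add: vec_def)

lemma unit_vec_in_vec: "j < r \<Longrightarrow> unit_vec j \<in> vec r"
  by (simp add: unit_vec_def vec_def)

lemma sum_in_vec:
  "(\<And>i. i \<in> S \<Longrightarrow> v i \<in> vec r) \<Longrightarrow> (\<lambda>k. \<Sum>i\<in>S. v i k) \<in> vec r"
  by (simp add: vec_def)

lemma scaled_unit_vec_in_vec: "j < r \<Longrightarrow> (\<lambda>k. (a::'a::semiring_1) * unit_vec j k) \<in> vec r"
  by (simp add: vec_def unit_vec_def)

lemma additive_on_vec_zero:
  fixes f :: "(nat \<Rightarrow> 'a::comm_monoid_add) \<Rightarrow> 'b::ab_group_add"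
  assumes "additive_on_vec r f"
  shows "f (\<lambda>_. 0) = 0"
proof -
  have "f (\<lambda>i. 0 + 0) = f (\<lambda>_. 0) + f (\<lambda>_. 0)"
    using assms[unfolded additive_on_vec_def, rule_format, OF zero_in_vec zero_in_vec] .
  then show ?thesis
    by simp
qed

lemma additive_on_vec_eq_sum:
  fixes f :: "(nat \<Rightarrow> 'a::semiring_1) \<Rightarrow> 'b::ab_group_add"
  assumes add: "additive_on_vec r f" and x: "x \<in> vec r"
  shows "f x = (\<Sum>j<r. f (\<lambda>k. x j * unit_vec j k))"
proof -
  have partial_sums: "f (\<lambda>k. \<Sum>j\<in>S. x j * unit_vec j k) = (\<Sum>j\<in>S. f (\<lambda>k. x j * unit_vec j k))"
    if "S \<subseteq> {..<r}" for S
    using finite_subset[OF that finite_lessThan] that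
  proof (induction S rule: finite_induct)
    case empty
    then show ?case
      using additive_on_vec_zero[OF add] by simp
  next
    case (insert j S)
    let ?u = "\<lambda>k. x j * unit_vec j k" and ?v = "\<lambda>k. \<Sum>i\<in>S. x i * unit_vec i k"
    have "?u \<in> vec r" "?v \<in> vec r"
      using insert.prems by (auto intro!: scaled_unit_vec_in_vec sum_in_vec)
    then have "f (\<lambda>k. ?u k + ?v k) = f ?u + f ?v"
      by (rule add[unfolded additive_on_vec_def, rule_format])
    then show ?case
      using insert by simp
  qed
  have "(\<lambda>k. \<Sum>j<r. x j * unit_vec j k) = x"
  proof
    fix k
    have "(\<Sum>j<r. x j * unit_vec j k) = (\<Sum>j<r. if k = j then x k else 0)"
      by (rule sum.cong) (simp_all add: unit_vec_def)
    then show "(\<Sum>j<r. x j * unit_vec j k) = x k"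
      using x by (simp add: vec_def)
  qed
  with partial_sums[OF order_refl] show ?thesis
    by simp
qed

lemma left_hom_additive: "left_hom r s d \<Longrightarrow> additive_on_vec r (\<lambda>x. d x k)"
  by (simp add: left_hom_def additive_on_vec_def fun_eq_iff)

lemma left_hom_K_additive: "left_hom_K r e \<Longrightarrow> additive_on_vec r e"
  by (simp add: left_hom_K_def additive_on_vec_def)

lemma left_hom_zero: "left_hom r s d \<Longrightarrow> d (\<lambda>_. 0) = (\<lambda>_. 0)"
  using additive_on_vec_zero[OF left_hom_additive] by blast

lemma left_hom_eq_matrix:
  assumes hom: "left_hom r s d" and x: "x \<in> vec r"
  shows "d x = (\<lambda>k. \<Sum>j<r. x j * d (unit_vec j) k)"
proof
  fix k
  have "d (\<lambda>i. x j * unit_vec j i) = lact (x j) (d (unit_vec j))" if "j < r" for j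
    using hom unit_vec_in_vec[OF that] unfolding left_hom_def lact_def by blast
  then show "d x k = (\<Sum>j<r. x j * d (unit_vec j) k)"
    using additive_on_vec_eq_sum[OF left_hom_additive[OF hom] x] by (simp add: lact_def)
qed

lemma left_hom_K_eq_matrix:
  assumes hom: "left_hom_K r e" and x: "x \<in> vec r"
  shows "e x = (\<Sum>j<r. augmentation (x j) * e (unit_vec j))"
proof -
  have "e (\<lambda>i. x j * unit_vec j i) = augmentation (x j) * e (unit_vec j)" if "j < r" for j
    using hom unit_vec_in_vec[OF that] unfolding left_hom_K_def lact_def by blast
  then show ?thesis
    using additive_on_vec_eq_sum[OF left_hom_K_additive[OF hom] x] by simp
qed

definition fibre_vec ::
    "(nat \<Rightarrow> ('g::group_add \<times> 'g, 'k::comm_ring_1) group_ring) \<Rightarrow> 'g \<Rightarrow> nat \<Rightarrow> ('g, 'k) group_ring" where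
  "fibre_vec W x = (\<lambda>j. fibre (W j) x)"

text \<open>The maps id \<otimes> d and id \<otimes> e on (KG \<otimes> KG) \<otimes>_KG -, in coordinates; the target of id \<otimes> e
  is identified with KG by multiplication.\<close>

definition induced_hom ::
    "nat \<Rightarrow> ((nat \<Rightarrow> ('g::group_add, 'k::comm_ring_1) group_ring) \<Rightarrow> nat \<Rightarrow> ('g, 'k) group_ring)
      \<Rightarrow> (nat \<Rightarrow> ('g \<times> 'g, 'k) group_ring) \<Rightarrow> nat \<Rightarrow> ('g \<times> 'g, 'k) group_ring" where
  "induced_hom r d V = (\<lambda>k. \<Sum>j<r. inner_act (V j) (d (unit_vec j) k))"

definition induced_aug ::
    "nat \<Rightarrow> ((nat \<Rightarrow> ('g::group_add, 'k::comm_ring_1) group_ring) \<Rightarrow> 'k)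
      \<Rightarrow> (nat \<Rightarrow> ('g \<times> 'g, 'k) group_ring) \<Rightarrow> ('g, 'k) group_ring" where
  "induced_aug r e W = (\<Sum>j<r. mult_map (W j) * Poly_Mapping.single 0 (e (unit_vec j)))"

lemma fibre_vec_in_vec: "W \<in> vec r \<Longrightarrow> fibre_vec W x \<in> vec r"
  by (simp add: vec_def fibre_vec_def)

lemma fibre_vecs_eqI: "(\<And>x. fibre_vec V x = fibre_vec W x) \<Longrightarrow> V = W"
  by (auto simp: fibre_vec_def fun_eq_iff intro: fibres_eqI)

lemma fibre_vec_induced_hom:
  assumes "left_hom r s d" and "V \<in> vec r"
  shows "fibre_vec (induced_hom r d V) x = d (fibre_vec V x)"
  using left_hom_eq_matrix[OF assms(1) fibre_vec_in_vec[OF assms(2)]]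
  by (simp add: fibre_vec_def induced_hom_def fibre_sum fibre_inner_act)

lemma lookup_induced_aug:
  assumes "left_hom_K r e" and "W \<in> vec r"
  shows "Poly_Mapping.lookup (induced_aug r e W) x = e (fibre_vec W x)"
  using left_hom_K_eq_matrix[OF assms(1) fibre_vec_in_vec[OF assms(2)]]
  by (simp add: induced_aug_def lookup_sum lookup_mult_single_zero lookup_mult_map fibre_vec_def)

lemma induced_hom_in_vec:
  assumes "left_hom r s d"
  shows "induced_hom r d V \<in> vec s"
proof -
  have "d (unit_vec j) k = 0" if "j < r" "s \<le> k" for j k
    using assms unit_vec_in_vec[OF that(1)] that(2) by (auto simp: left_hom_def vec_def)
  then show ?thesis
    by (simp add: induced_hom_def vec_def)
qed

lemma bi_hom_induced_hom:
  assumes "left_hom r s d"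
  shows "bi_hom r s (induced_hom r d)"
  using induced_hom_in_vec[OF assms] unfolding bi_hom_def
  by (auto simp: induced_hom_def inner_act_add sum.distrib bl_act_def br_act_def
      inner_act_tens_left inner_act_tens_right sum_distrib_left sum_distrib_right)

lemma bi_hom_KG_induced_aug: "bi_hom_KG r (induced_aug r e)"
  unfolding bi_hom_KG_def
  by (auto simp: induced_aug_def mult_map_add distrib_right sum.distrib bl_act_def br_act_def
      mult_map_tens_left mult_map_tens_right sum_distrib_left sum_distrib_right mult.assoc single_zero_commute)

lemma induced_hom_eq_0_iff:
  assumes "left_hom r s d" and "V \<in> vec r"
  shows "induced_hom r d V = (\<lambda>_. 0) \<longleftrightarrow> (\<forall>x. d (fibre_vec V x) = (\<lambda>_. 0))"
proof -
  have "induced_hom r d V = (\<lambda>_. 0) \<longleftrightarrow> (\<forall>x k. fibre_vec (induced_hom r d V) x k = 0)"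
    by (auto simp: fibre_vec_def fun_eq_iff simp flip: fibres_eq_0_iff)
  then show ?thesis
    by (simp add: fibre_vec_induced_hom[OF assms] fun_eq_iff)
qed

lemma induced_aug_eq_0_iff:
  assumes "left_hom_K r e" and "W \<in> vec r"
  shows "induced_aug r e W = 0 \<longleftrightarrow> (\<forall>x. e (fibre_vec W x) = 0)"
  using lookup_induced_aug[OF assms] by (metis lookup_zero poly_mapping_eqI)

lemma fibre_vec_eq_0_outside:
  assumes "W \<in> vec t" and "y \<notin> (\<lambda>p. fst p + snd p) ` (\<Union>j<t. Poly_Mapping.keys (W j))"
  shows "fibre_vec W y = (\<lambda>_. 0)"
proof
  fix j
  show "fibre_vec W y j = 0"
  proof (cases "j < t")
    case True
    then show ?thesis
      using assms(2) by (auto simp: fibre_vec_def intro: fibre_eq_0_outside)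
  next
    case False
    then show ?thesis
      using assms(1) by (simp add: fibre_vec_def vec_def)
  qed
qed

lemma fibre_vec_sum_basis:
  assumes "finite X"
  shows "fibre_vec (\<lambda>j. \<Sum>x\<in>X. inner_act (Poly_Mapping.single (x, 0) 1) (V x j)) y =
    (if y \<in> X then V y else (\<lambda>_. 0))"
proof
  fix j
  have "fibre_vec (\<lambda>j. \<Sum>x\<in>X. inner_act (Poly_Mapping.single (x, 0) 1) (V x j)) y j =
      (\<Sum>x\<in>X. (if y = x then 1 else 0) * V x j)"
    by (simp add: fibre_vec_def fibre_sum fibre_inner_act fibre_single_basis)
  also have "\<dots> = (\<Sum>x\<in>X. if y = x then V x j else 0)"
    by (rule sum.cong) simp_all
  also have "\<dots> = (if y \<in> X then V y else (\<lambda>_. 0)) j"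
    using assms by simp
  finally show "fibre_vec (\<lambda>j. \<Sum>x\<in>X. inner_act (Poly_Mapping.single (x, 0) 1) (V x j)) y j =
      (if y \<in> X then V y else (\<lambda>_. 0)) j" .
qed

lemma in_induced_hom_image:
  assumes hom: "left_hom s t d" and W: "W \<in> vec t" and fibres: "\<And>x. fibre_vec W x \<in> d ` vec s"
  shows "W \<in> induced_hom s d ` vec s"
proof -
  from fibres have "\<forall>x. \<exists>v. v \<in> vec s \<and> fibre_vec W x = d v"
    by blast
  then obtain V where V: "\<And>x. V x \<in> vec s" "\<And>x. fibre_vec W x = d (V x)"
    by (metis (full_types))
  define X where "X = (\<lambda>p. fst p + snd p) ` (\<Union>j<t. Poly_Mapping.keys (W j))"
  define V' where "V' = (\<lambda>j. \<Sum>x\<in>X. inner_act (Poly_Mapping.single (x, 0) 1) (V x j))"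
  have X: "finite X"
    by (simp add: X_def)
  have V': "V' \<in> vec s"
    using V(1) by (simp add: V'_def vec_def)
  have "induced_hom s d V' = W"
  proof (rule fibre_vecs_eqI)
    fix y
    have "fibre_vec (induced_hom s d V') y = d (fibre_vec V' y)"
      by (rule fibre_vec_induced_hom[OF hom V'])
    also have "\<dots> = d (if y \<in> X then V y else (\<lambda>_. 0))"
      unfolding V'_def by (simp only: fibre_vec_sum_basis[OF X])
    also have "\<dots> = fibre_vec W y"
      using V(2)[of y] left_hom_zero[OF hom] fibre_vec_eq_0_outside[OF W, of y]
      by (cases "y \<in> X") (simp_all add: X_def)
    finally show "fibre_vec (induced_hom s d V') y = fibre_vec W y" .
  qed
  with V' show ?thesis
    by blast
qed

lemma induced_exact:
  fixes d :: "(nat \<Rightarrow> ('g::group_add, 'k::comm_ring_1) group_ring) \<Rightarrow> nat \<Rightarrow> ('g, 'k) group_ring"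
    and \<phi> :: "(nat \<Rightarrow> ('g, 'k) group_ring) \<Rightarrow> 'z"
    and \<Phi> :: "(nat \<Rightarrow> ('g \<times> 'g, 'k) group_ring) \<Rightarrow> 'y"
  assumes hom: "left_hom s t d"
    and exact: "{v \<in> vec t. \<phi> v = z} = d ` vec s"
    and fibrewise: "\<And>W. W \<in> vec t \<Longrightarrow> \<Phi> W = Z \<longleftrightarrow> (\<forall>x. \<phi> (fibre_vec W x) = z)"
  shows "{W \<in> vec t. \<Phi> W = Z} = induced_hom s d ` vec s"
proof
  show "induced_hom s d ` vec s \<subseteq> {W \<in> vec t. \<Phi> W = Z}"
  proof clarify
    fix V :: "nat \<Rightarrow> ('g \<times> 'g, 'k) group_ring"
    assume V: "V \<in> vec s"
    have "\<phi> (fibre_vec (induced_hom s d V) x) = z" for x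
      using exact fibre_vec_in_vec[OF V] by (auto simp: fibre_vec_induced_hom[OF hom V])
    then show "induced_hom s d V \<in> vec t \<and> \<Phi> (induced_hom s d V) = Z"
      using fibrewise induced_hom_in_vec[OF hom] by blast
  qed
  show "{W \<in> vec t. \<Phi> W = Z} \<subseteq> induced_hom s d ` vec s"
  proof
    fix W
    assume "W \<in> {W \<in> vec t. \<Phi> W = Z}"
    then have "W \<in> vec t" and "\<Phi> W = Z"
      by simp_all
    then have "fibre_vec W x \<in> d ` vec s" for x
      using fibrewise exact fibre_vec_in_vec by blast
    then show "W \<in> induced_hom s d ` vec s"
      using in_induced_hom_image[OF hom \<open>W \<in> vec t\<close>] by blast
  qed
qed

lemma induced_aug_surj:
  assumes hom: "left_hom_K r e" and surj: "e ` vec r = UNIV"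
  shows "induced_aug r e ` vec r = UNIV"
proof -
  obtain v where v: "v \<in> vec r" "e v = 1"
    using surj by (metis UNIV_I imageE)
  define W where "W = (\<lambda>j. inner_act (Poly_Mapping.single (0, 0) 1) (v j))"
  have W: "W \<in> vec r"
    using v(1) by (simp add: W_def vec_def)
  have "fibre_vec W x = (if x = 0 then v else (\<lambda>_. 0))" for x
    by (simp add: W_def fibre_vec_def fibre_inner_act fibre_single_basis fun_eq_iff)
  then have W_1: "induced_aug r e W = 1"
    using lookup_induced_aug[OF hom W] v(2) left_hom_K_additive[OF hom, THEN additive_on_vec_zero]
    by (intro poly_mapping_eqI) (simp add: lookup_one when_def)
  have "a = induced_aug r e (bl_act a W)" and "bl_act a W \<in> vec r" for a
    using bi_hom_KG_induced_aug[of r e] W W_1 by (auto simp: bi_hom_KG_def bl_act_def vec_def)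
  then show ?thesis
    by blast
qed

theorem theorem2:
  fixes n :: nat
  assumes "FP TYPE('k::comm_ring_1) TYPE('g::group_add) n"
  shows "bi_FP TYPE('k) TYPE('g) n"
proof -
  obtain r and e :: "(nat \<Rightarrow> ('g, 'k) group_ring) \<Rightarrow> 'k"
    and d :: "nat \<Rightarrow> (nat \<Rightarrow> ('g, 'k) group_ring) \<Rightarrow> nat \<Rightarrow> ('g, 'k) group_ring" where
    e: "left_hom_K (r 0) e" and d: "\<forall>i\<in>{1..n}. left_hom (r i) (r (i - 1)) (d i)"
    and e_surj: "e ` vec (r 0) = UNIV"
    and exact_0: "1 \<le> n \<longrightarrow> {x \<in> vec (r 0). e x = 0} = d 1 ` vec (r 1)"
    and exact: "\<forall>i\<in>{1..<n}. {x \<in> vec (r i). d i x = (\<lambda>_. 0)} = d (i + 1) ` vec (r (i + 1))"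
    using assms unfolding FP_def by (elim exE conjE) (rule that)
  have hom: "left_hom (r i) (r (i - 1)) (d i)" if "1 \<le> i" and "i \<le> n" for i
    using d that by simp
  let ?E = "induced_aug (r 0) e" and ?D = "\<lambda>i. induced_hom (r i) (d i)"
  have exact_E: "{W \<in> vec (r 0). ?E W = 0} = ?D 1 ` vec (r 1)" if "1 \<le> n"
    by (rule induced_exact[OF _ _ induced_aug_eq_0_iff[OF e]]) (use hom[of 1] exact_0 that in simp_all)
  have exact_D: "{W \<in> vec (r i). ?D i W = (\<lambda>_. 0)} = ?D (i + 1) ` vec (r (i + 1))" if "1 \<le> i" "i < n" for i
    by (rule induced_exact[OF _ _ induced_hom_eq_0_iff[OF hom[OF that(1) less_imp_le[OF that(2)]]]])
      (use hom[of "i + 1"] exact that in simp_all)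
  show ?thesis
    unfolding bi_FP_def
    using bi_hom_KG_induced_aug bi_hom_induced_hom[OF hom] induced_aug_surj[OF e e_surj] exact_E exact_D
    by (intro exI[of _ r] exI[of _ ?E] exI[of _ ?D] conjI ballI impI) simp_all
qed

end
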